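(* Let $\lambda=(\lambda_1,\dots,\lambda_l)$ be a partition of length $l$, $\tau(t)=s_\lambda(t)+\sum_{\lambda<\mu}\xi_\mu s_\mu(t)$ with $\xi_\mu\in\mathbb C$, and $0\le k\le l$. Then $$\partial_1^{N_{\lambda,k}}\tau\Big(\sum_{i=1}^k[x_i]\Big)=c'_{\lambda,k}\,\tau^{(k)}\Big(\sum_{i=1}^k[x_i]\Big),\qquad c'_{\lambda,k}=\frac{N_{\lambda,k}!}{\prod_{i=1}^{l-k}w_i!}\prod_{1\le i<j\le l-k}(w_j-w_i).$$
   Context: For $t=(t_1,t_2,\dots)$ define $p_m(t)$ by $\exp(\sum_{m\ge1}t_mk^m)=\sum_{m\ge0}p_m(t)k^m$, $p_m=0$ for $m<0$; $s_\mu(t)=\det(p_{\mu_i-i+j}(t))_{1\le i,j\le l}$. $[x]=(x,x^2/2,\dots)$, $\partial_1=\partial/\partial t_1$. $\lambda<\mu$ means $\lambda_i\le\mu_i$ for all $i$ and $\lambda\ne\mu$. $\tau$ is a formal series, differentiated termwise, evaluations being formal power series in the $x_i$. $N_{\lambda,k}=\lambda_{k+1}+\dots+\lambda_l$; $(w_l,\dots,w_1)=(\lambda_1,\dots,\lambda_l)+(l-1,\dots,1,0)$. For $1\le k\le l$, $\tau^{(k)}(t)=s_{(\lambda_1,\dots,\lambda_k)}(t)+\sum_\mu\xi_\mu s_{(\mu_1,\dots,\mu_k)}(t)$ summed over partitions $\mu=(\mu_1,\dots,\mu_l)$ with $\lambda<\mu$ and $\mu_i=\lambda_i$ for $k+1\le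 i\le l$; $\tau^{(0)}=1$. For $k=0$ evaluation is at $t=0$. *)

theory Defs
  imports Complex_Main "HOL-Analysis.Derivative"
    "HOL-Computational_Algebra.Formal_Power_Series"
    "Jordan_Normal_Form.Determinant"
begin

text \<open>Partitions are represented as lists of positive, weakly decreasing naturals.
  Entry i (0-indexed) of a list is the part mu_(i+1); parts beyond the length are 0.\<close>

definition is_partition :: "nat list \<Rightarrow> bool" where
  "is_partition mu \<longleftrightarrow> sorted_wrt (\<ge>) mu \<and> 0 \<notin> set mu"

definition part :: "nat list \<Rightarrow> nat \<Rightarrow> nat" where
  "part mu i = (if i < length mu then mu ! i else 0)"

definition plt :: "nat list \<Rightarrow> nat list \<Rightarrow> bool" where
  "plt lam mu \<longleftrightarrow> (\<forall>i. part lam i \<le> part mu i) \<and> lam \<noteq> mu"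

text \<open>Times t = (t_1, t_2, ...) are functions nat \<Rightarrow> complex (t 0 unused).
  p_m(t) is the coefficient of k^m in exp(sum_{m\<ge>1} t_m k^m).\<close>
definition hp :: "nat \<Rightarrow> (nat \<Rightarrow> complex) \<Rightarrow> complex" where
  "hp m t = fps_nth (fps_compose (fps_exp 1) (Abs_fps (\<lambda>n. if n = 0 then 0 else t n))) m"

definition hpi :: "int \<Rightarrow> (nat \<Rightarrow> complex) \<Rightarrow> complex" where
  "hpi m t = (if m < 0 then 0 else hp (nat m) t)"

definition schur :: "nat list \<Rightarrow> (nat \<Rightarrow> complex) \<Rightarrow> complex" where
  "schur mu t = det (mat (length mu) (length mu)
      (\<lambda>(i, j). hpi (int (mu ! i) - int i + int j) t))"

definition d1 :: "((nat \<Rightarrow> complex) \<Rightarrow> complex) \<Rightarrow> ((nat \<Rightarrow> complex) \<Rightarrow> complex)" where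
  "d1 F t = deriv (\<lambda>z. F (t(1 := z))) (t 1)"

text \<open>t = [x_1] + ... + [x_k], where [x] = (x, x^2/2, x^3/3, ...).\<close>
definition tx :: "nat \<Rightarrow> (nat \<Rightarrow> complex) \<Rightarrow> nat \<Rightarrow> complex" where
  "tx k x m = (\<Sum>i=1..k. x i ^ m) / of_nat m"

text \<open>coefficient of s_mu in tau = s_lambda + sum_{lambda < mu} xi_mu s_mu\<close>
definition tau_coef :: "nat list \<Rightarrow> (nat list \<Rightarrow> complex) \<Rightarrow> nat list \<Rightarrow> complex" where
  "tau_coef lam xi mu = (if mu = lam then 1 else if plt lam mu then xi mu else 0)"

definition Nlk :: "nat list \<Rightarrow> nat \<Rightarrow> nat" where
  "Nlk lam k = (\<Sum>i\<in>{k..<length lam}. lam ! i)"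

text \<open>(w_l,...,w_1) = (lambda_1,...,lambda_l) + (l-1,...,1,0), i.e.
  w_j = lambda_{l+1-j} + j - 1 for 1 \<le> j \<le> l.\<close>
definition wv :: "nat list \<Rightarrow> nat \<Rightarrow> nat" where
  "wv lam j = lam ! (length lam - j) + (j - 1)"

definition cprime :: "nat list \<Rightarrow> nat \<Rightarrow> complex" where
  "cprime lam k =
     of_nat (fact (Nlk lam k)) / (\<Prod>i=1..length lam - k. of_nat (fact (wv lam i)))
     * (\<Prod>(i, j)\<in>{(i, j). 1 \<le> i \<and> i < j \<and> j \<le> length lam - k}.
          of_int (int (wv lam j) - int (wv lam i)))"

end

theory Submission
  imports Defs "HOL-Combinatorics.Multiset_Permutations"
begin

(* By Jacobi-Trudi, s_mu = det (h_(mu_i - i + j)), and d/dt_1 h_m = h_(m-1); so the N-th t_1-derivative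
   of s_mu is a sum, over words of length N in the row indices, of determinants whose rows are lowered
   by the letter counts of the word.  At t = [x_1] + ... + [x_k] the series sum_m h_m z^m is the
   reciprocal of the polynomial prod_i (1 - x_i z) of degree k, so a unitriangular column operation
   turns every column j >= k into a unit vector, and a term survives only if each such column is
   matched by a row lowered exactly onto it.  As N = lambda_(k+1) + ... + lambda_l and mu dominates
   lambda, an exchange argument shows that this forces mu to have length l and to agree with lambda
   from row k on, with all lowering in the rows i >= k, which are sent to the unit columns by a
   permutation rho; the term is then sign(rho) s_(mu_1,...,mu_k).  Counting the words with the
   prescribed letter counts (a multinomial coefficient) and summing over rho gives N! times a
   falling-factorial Vandermonde determinant, which evaluates to c'_(lambda,k). *)

section \<open>Complete homogeneous polynomials and the derivative in \<open>t\<^sub>1\<close>\<close>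

definition time_fps :: "(nat \<Rightarrow> complex) \<Rightarrow> complex fps" where
  "time_fps t = Abs_fps (\<lambda>n. if n = 0 then 0 else t n)"

lemma hp_time_fps: "hp m t = fps_nth (fps_exp 1 oo time_fps t) m"
  by (simp add: hp_def time_fps_def)

lemma hp_0 [simp]: "hp 0 t = 1"
  by (simp add: hp_time_fps time_fps_def)

lemma hpi_neg [simp]: "m < 0 \<Longrightarrow> hpi m t = 0"
  by (simp add: hpi_def)

lemma hp_recurrence:
  "of_nat m * hp m t = (\<Sum>j=1..m. of_nat j * t j * hp (m - j) t)"
proof (cases m)
  case (Suc p)
  let ?E = "fps_exp (1::complex) oo time_fps t"
  have "fps_deriv ?E = (fps_deriv (fps_exp 1) oo time_fps t) * fps_deriv (time_fps t)"
    by (rule fps_compose_deriv) (simp add: time_fps_def)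
  then have deriv_E: "fps_deriv ?E = ?E * fps_deriv (time_fps t)"
    by simp
  have "of_nat m * hp m t = fps_nth (fps_deriv ?E) p"
    using Suc by (simp add: hp_time_fps)
  also have "\<dots> = (\<Sum>i=0..p. fps_nth ?E i * (of_nat (p - i + 1) * t (p - i + 1)))"
    unfolding deriv_E fps_mult_nth by (simp add: time_fps_def)
  also have "\<dots> = (\<Sum>j=1..m. of_nat j * t j * hp (m - j) t)"
    by (rule sum.reindex_bij_witness[where i="\<lambda>j. m - j" and j="\<lambda>i. m - i"])
      (auto simp: Suc hp_time_fps Suc_diff_le)
  finally show ?thesis .
qed simp

lemma sum_hpi_pred:
  "(\<Sum>j=1..m. of_nat j * t j * hpi (int (m - j) - 1) t) = of_nat (m - 1) * hpi (int m - 1) t"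
proof (cases m)
  case (Suc p)
  have "(\<Sum>j=1..m. of_nat j * t j * hpi (int (m - j) - 1) t)
      = (\<Sum>j=1..p. of_nat j * t j * hpi (int (m - j) - 1) t)"
    using Suc by (simp add: atLeastAtMostSuc_conv)
  also have "\<dots> = (\<Sum>j=1..p. of_nat j * t j * hp (p - j) t)"
    using Suc by (intro sum.cong) (auto simp: hpi_def nat_diff_distrib)
  also have "\<dots> = of_nat p * hp p t"
    by (rule hp_recurrence[symmetric])
  finally show ?thesis
    using Suc by (simp add: hpi_def)
qed simp

definition has_d1_deriv ::
    "((nat \<Rightarrow> complex) \<Rightarrow> complex) \<Rightarrow> ((nat \<Rightarrow> complex) \<Rightarrow> complex) \<Rightarrow> bool" where
  "has_d1_deriv F G \<longleftrightarrow> (\<forall>t z. ((\<lambda>z. F (t(1 := z))) has_field_derivative G (t(1 := z))) (at z))"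

lemma d1_eqI: "has_d1_deriv F G \<Longrightarrow> d1 F = G"
proof
  fix t
  assume "has_d1_deriv F G"
  then have "((\<lambda>z. F (t(1 := z))) has_field_derivative G (t(1 := t 1))) (at (t 1))"
    unfolding has_d1_deriv_def by blast
  then show "d1 F t = G t"
    unfolding d1_def by (simp add: DERIV_imp_deriv)
qed

lemma has_d1_deriv_var: "has_d1_deriv (\<lambda>t. t j) (\<lambda>t. if j = 1 then 1 else 0)"
  by (auto simp: has_d1_deriv_def)

lemma has_d1_deriv_mult:
  "has_d1_deriv F F' \<Longrightarrow> has_d1_deriv G G' \<Longrightarrow>
    has_d1_deriv (\<lambda>t. F t * G t) (\<lambda>t. F' t * G t + F t * G' t)"
  by (auto simp: has_d1_deriv_def algebra_simps intro!: derivative_eq_intros)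

lemma has_d1_deriv_cmult:
  "has_d1_deriv F F' \<Longrightarrow> has_d1_deriv (\<lambda>t. c * F t) (\<lambda>t. c * F' t)"
  by (auto simp: has_d1_deriv_def intro!: derivative_eq_intros)

lemma has_d1_deriv_sum:
  "(\<And>a. a \<in> A \<Longrightarrow> has_d1_deriv (F a) (F' a)) \<Longrightarrow>
    has_d1_deriv (\<lambda>t. \<Sum>a\<in>A. F a t) (\<lambda>t. \<Sum>a\<in>A. F' a t)"
  by (auto simp: has_d1_deriv_def intro!: DERIV_sum)

lemma has_d1_deriv_prod:
  "(\<And>a. a \<in> A \<Longrightarrow> has_d1_deriv (F a) (F' a)) \<Longrightarrow>
    has_d1_deriv (\<lambda>t. \<Prod>a\<in>A. F a t) (\<lambda>t. \<Sum>a\<in>A. F' a t * (\<Prod>b\<in>A-{a}. F b t))"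
  by (auto simp: has_d1_deriv_def intro!: has_field_derivative_prod)

lemma has_d1_deriv_hp: "has_d1_deriv (hp m) (hpi (int m - 1))"
proof (induction m rule: less_induct)
  case (less m)
  show ?case
  proof (cases "m = 0")
    case True
    then show ?thesis by (simp add: has_d1_deriv_def)
  next
    case False
    have hp_eq: "hp m = (\<lambda>t. (1 / of_nat m) * (\<Sum>j=1..m. of_nat j * t j * hp (m - j) t))"
      using hp_recurrence[of m] False by (auto simp: field_simps)
    have "has_d1_deriv (\<lambda>t. (1 / of_nat m) * (\<Sum>j=1..m. of_nat j * t j * hp (m - j) t))
       (\<lambda>t. (1 / of_nat m) * (\<Sum>j=1..m. of_nat j * (if j = 1 then 1 else 0) * hp (m - j) t
            + of_nat j * t j * hpi (int (m - j) - 1) t))"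
      using less False
      by (intro has_d1_deriv_cmult has_d1_deriv_sum has_d1_deriv_mult has_d1_deriv_var)
        (simp_all flip: of_nat_diff)
    also have "(\<lambda>t. (1 / of_nat m) * (\<Sum>j=1..m. of_nat j * (if j = 1 then 1 else 0) * hp (m - j) t
            + of_nat j * t j * hpi (int (m - j) - 1) t)) = hpi (int m - 1)"
    proof
      fix t
      have "(\<Sum>j=1..m. of_nat j * (if j = 1 then 1 else 0) * hp (m - j) t)
          = (\<Sum>j=1..m. if j = 1 then hp (m - 1) t else 0)"
        by (intro sum.cong) auto
      also have "\<dots> = hpi (int m - 1) t"
        using False by (simp add: hpi_def nat_diff_distrib)
      finally have first_sum:
        "(\<Sum>j=1..m. of_nat j * (if j = 1 then 1 else 0) * hp (m - j) t) = hpi (int m - 1) t" .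
      have "(1 / of_nat m) * (\<Sum>j=1..m. of_nat j * (if j = 1 then 1 else 0) * hp (m - j) t
            + of_nat j * t j * hpi (int (m - j) - 1) t)
          = (1 / of_nat m) * (hpi (int m - 1) t + of_nat (m - 1) * hpi (int m - 1) t)"
        by (simp only: sum.distrib first_sum sum_hpi_pred)
      also have "\<dots> = hpi (int m - 1) t"
        using False by (simp add: of_nat_diff field_simps)
      finally show "(1 / of_nat m) * (\<Sum>j=1..m. of_nat j * (if j = 1 then 1 else 0) * hp (m - j) t
            + of_nat j * t j * hpi (int (m - j) - 1) t) = hpi (int m - 1) t" .
    qed
    finally show ?thesis
      unfolding hp_eq .
  qed
qed

lemma has_d1_deriv_hpi: "has_d1_deriv (hpi m) (hpi (m - 1))"
proof (cases "m < 0")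
  case True
  then show ?thesis by (simp add: hpi_def has_d1_deriv_def)
next
  case False
  then have "hpi m = hp (nat m)"
    by (auto simp: hpi_def)
  then show ?thesis
    using has_d1_deriv_hp[of "nat m"] False by simp
qed

section \<open>Generalised Jacobi--Trudi determinants\<close>

definition jt_det :: "nat \<Rightarrow> (nat \<Rightarrow> int) \<Rightarrow> (nat \<Rightarrow> complex) \<Rightarrow> complex" where
  "jt_det n c t = det (mat n n (\<lambda>(i, j). hpi (c i + int j) t))"

lemma schur_eq_jt_det: "schur mu = jt_det (length mu) (\<lambda>i. int (mu ! i) - int i)"
  by (simp add: schur_def jt_det_def fun_eq_iff)

lemma jt_det_expand:
  "jt_det n c t = (\<Sum>p\<in>{p. p permutes {0..<n}}. signof p * (\<Prod>i\<in>{0..<n}. hpi (c i + int (p i)) t))"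
  unfolding jt_det_def
  by (subst det_def'[of _ n]) (auto intro!: sum.cong prod.cong simp: permutes_in_image)

lemma prod_lower_row:
  fixes n r :: nat
  assumes "r \<in> {0..<n}"
  shows "(\<Prod>i\<in>{0..<n}. hpi ((c(r := c r - 1)) i + int (p i)) t)
       = hpi (c r + int (p r) - 1) t * (\<Prod>i\<in>{0..<n}-{r}. hpi (c i + int (p i)) t)"
proof -
  have "(\<Prod>i\<in>{0..<n}. hpi ((c(r := c r - 1)) i + int (p i)) t)
      = hpi ((c(r := c r - 1)) r + int (p r)) t * (\<Prod>i\<in>{0..<n}-{r}. hpi ((c(r := c r - 1)) i + int (p i)) t)"
    by (rule prod.remove) (use assms in auto)
  also have "\<dots> = hpi (c r + int (p r) - 1) t * (\<Prod>i\<in>{0..<n}-{r}. hpi (c i + int (p i)) t)"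
    by (auto intro!: prod.cong arg_cong2[where f=hpi])
  finally show ?thesis .
qed

lemma has_d1_deriv_jt_det:
  "has_d1_deriv (jt_det n c) (\<lambda>t. \<Sum>r\<in>{0..<n}. jt_det n (c(r := c r - 1)) t)"
proof -
  let ?P = "{p. p permutes {0..<n}}"
  have "has_d1_deriv (jt_det n c) (\<lambda>t. \<Sum>p\<in>?P. signof p *
     (\<Sum>r\<in>{0..<n}. hpi (c r + int (p r) - 1) t * (\<Prod>i\<in>{0..<n}-{r}. hpi (c i + int (p i)) t)))"
    unfolding jt_det_expand[abs_def]
    by (intro has_d1_deriv_sum has_d1_deriv_cmult has_d1_deriv_prod has_d1_deriv_hpi)
  also have "(\<lambda>t. \<Sum>p\<in>?P. signof p *
     (\<Sum>r\<in>{0..<n}. hpi (c r + int (p r) - 1) t * (\<Prod>i\<in>{0..<n}-{r}. hpi (c i + int (p i)) t)))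
     = (\<lambda>t. \<Sum>r\<in>{0..<n}. jt_det n (c(r := c r - 1)) t)"
  proof
    fix t
    have "(\<Sum>p\<in>?P. signof p *
        (\<Sum>r\<in>{0..<n}. hpi (c r + int (p r) - 1) t * (\<Prod>i\<in>{0..<n}-{r}. hpi (c i + int (p i)) t)))
      = (\<Sum>r\<in>{0..<n}. \<Sum>p\<in>?P. signof p *
        (hpi (c r + int (p r) - 1) t * (\<Prod>i\<in>{0..<n}-{r}. hpi (c i + int (p i)) t)))"
      by (simp add: sum_distrib_left sum.swap[of _ _ "{0..<n}"])
    also have "\<dots> = (\<Sum>r\<in>{0..<n}. jt_det n (c(r := c r - 1)) t)"
      unfolding jt_det_expand by (intro sum.cong refl) (simp only: prod_lower_row)
    finally show "(\<Sum>p\<in>?P. signof p *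
        (\<Sum>r\<in>{0..<n}. hpi (c r + int (p r) - 1) t * (\<Prod>i\<in>{0..<n}-{r}. hpi (c i + int (p i)) t)))
      = (\<Sum>r\<in>{0..<n}. jt_det n (c(r := c r - 1)) t)" .
  qed
  finally show ?thesis .
qed

definition words :: "nat \<Rightarrow> nat \<Rightarrow> nat list set" where
  "words N n = {xs. set xs \<subseteq> {0..<n} \<and> length xs = N}"

lemma finite_words [simp]: "finite (words N n)"
  unfolding words_def by (rule finite_lists_length_eq) simp

lemma words_Suc: "words (Suc N) n = (\<lambda>(r, xs). r # xs) ` ({0..<n} \<times> words N n)"
  unfolding words_def by (auto simp: image_iff length_Suc_conv)

lemma sum_count_mset:
  "set xs \<subseteq> A \<Longrightarrow> finite A \<Longrightarrow> (\<Sum>i\<in>A. count (mset xs) i) = length xs"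
proof (induction xs)
  case (Cons x xs)
  have "(\<Sum>i\<in>A. count (mset (x # xs)) i) = (\<Sum>i\<in>A. count (mset xs) i + (if i = x then 1 else 0))"
    by (intro sum.cong) auto
  also have "\<dots> = (\<Sum>i\<in>A. count (mset xs) i) + 1"
    using Cons.prems by (simp add: sum.distrib)
  finally show ?case
    using Cons by simp
qed simp

text \<open>Each \<open>\<partial>\<^sub>1\<close> lowers one row index; a word records which rows were lowered in turn.\<close>

lemma d1_pow_jt_det:
  "(d1 ^^ N) (jt_det n c) = (\<lambda>t. \<Sum>xs\<in>words N n. jt_det n (\<lambda>i. c i - int (count (mset xs) i)) t)"
proof (induction N)
  case 0
  have "words 0 n = {[]}"
    by (auto simp: words_def)
  then show ?case by simp
next
  case (Suc N)
  have lower: "(\<lambda>i. c i - int (count (mset xs) i))(r := c r - int (count (mset xs) r) - 1)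
      = (\<lambda>i. c i - int (count (mset (r # xs)) i))" for r xs
    by auto
  have inj: "inj_on (\<lambda>(r, xs). r # xs) ({0..<n} \<times> words N n)"
    by (auto simp: inj_on_def)
  have "has_d1_deriv (\<lambda>t. \<Sum>xs\<in>words N n. jt_det n (\<lambda>i. c i - int (count (mset xs) i)) t)
      (\<lambda>t. \<Sum>xs\<in>words N n. \<Sum>r\<in>{0..<n}. jt_det n (\<lambda>i. c i - int (count (mset (r # xs)) i)) t)"
    unfolding lower[symmetric] by (intro has_d1_deriv_sum has_d1_deriv_jt_det)
  also have "(\<lambda>t. \<Sum>xs\<in>words N n. \<Sum>r\<in>{0..<n}. jt_det n (\<lambda>i. c i - int (count (mset (r # xs)) i)) t)
      = (\<lambda>t. \<Sum>ys\<in>words (Suc N) n. jt_det n (\<lambda>i. c i - int (count (mset ys) i)) t)"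
  proof
    fix t
    have "(\<Sum>xs\<in>words N n. \<Sum>r\<in>{0..<n}. jt_det n (\<lambda>i. c i - int (count (mset (r # xs)) i)) t)
        = (\<Sum>(r, xs)\<in>{0..<n} \<times> words N n. jt_det n (\<lambda>i. c i - int (count (mset (r # xs)) i)) t)"
      by (subst sum.swap) (rule sum.cartesian_product)
    also have "\<dots> = (\<Sum>ys\<in>words (Suc N) n. jt_det n (\<lambda>i. c i - int (count (mset ys) i)) t)"
      unfolding words_Suc sum.reindex[OF inj] by (simp add: case_prod_unfold)
    finally show "(\<Sum>xs\<in>words N n. \<Sum>r\<in>{0..<n}. jt_det n (\<lambda>i. c i - int (count (mset (r # xs)) i)) t)
        = (\<Sum>ys\<in>words (Suc N) n. jt_det n (\<lambda>i. c i - int (count (mset ys) i)) t)" .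
  qed
  finally show ?case
    using Suc by (simp add: d1_eqI)
qed

section \<open>Evaluation at \<open>t = [x\<^sub>1] + \<dots> + [x\<^sub>k]\<close>\<close>

definition miwa_poly :: "(nat \<Rightarrow> complex) \<Rightarrow> nat \<Rightarrow> complex fps" where
  "miwa_poly x k = (\<Prod>i=1..k. 1 - fps_const (x i) * fps_X)"

definition power_sums_fps :: "(nat \<Rightarrow> complex) \<Rightarrow> nat \<Rightarrow> complex fps" where
  "power_sums_fps x k = Abs_fps (\<lambda>n. \<Sum>i=1..k. x i ^ Suc n)"

lemma miwa_poly_Suc: "miwa_poly x (Suc k) = miwa_poly x k * (1 - fps_const (x (Suc k)) * fps_X)"
  by (simp add: miwa_poly_def)

lemma power_sums_fps_Suc:
  "power_sums_fps x (Suc k) = power_sums_fps x k + Abs_fps (\<lambda>n. x (Suc k) ^ Suc n)"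
  by (simp add: power_sums_fps_def fps_eq_iff)

lemma one_minus_X_times_geometric:
  "(1 - fps_const c * fps_X) * Abs_fps (\<lambda>n. c ^ Suc n) = fps_const (c :: 'a :: comm_ring_1)"
proof -
  have "(1 - fps_const c * fps_X) * Abs_fps (\<lambda>n. c ^ Suc n) =
     Abs_fps (\<lambda>n. c ^ Suc n) - fps_const c * (fps_X * Abs_fps (\<lambda>n. c ^ Suc n))"
    by (simp add: algebra_simps)
  also have "\<dots> = fps_const c"
    by (auto simp: fps_eq_iff) (metis Suc_pred power_Suc)
  finally show ?thesis .
qed

lemma fps_deriv_miwa_poly: "fps_deriv (miwa_poly x k) = - miwa_poly x k * power_sums_fps x k"
proof (induction k)
  case 0
  then show ?case by (simp add: miwa_poly_def power_sums_fps_def fps_eq_iff)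
next
  case (Suc k)
  let ?c = "x (Suc k)"
  have "fps_deriv (miwa_poly x (Suc k))
      = fps_deriv (miwa_poly x k) * (1 - fps_const ?c * fps_X) - miwa_poly x k * fps_const ?c"
    by (simp add: miwa_poly_Suc) (metis fps_const_neg mult_minus_right)
  also have "\<dots> = - miwa_poly x k * power_sums_fps x k * (1 - fps_const ?c * fps_X)
      - miwa_poly x k * ((1 - fps_const ?c * fps_X) * Abs_fps (\<lambda>n. ?c ^ Suc n))"
    using Suc one_minus_X_times_geometric[of ?c] by simp
  also have "\<dots> = - miwa_poly x (Suc k) * power_sums_fps x (Suc k)"
    by (simp add: miwa_poly_Suc power_sums_fps_Suc algebra_simps)
  finally show ?case .
qed

lemma miwa_poly_nth_0 [simp]: "fps_nth (miwa_poly x k) 0 = 1"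
  by (induction k) (simp_all add: miwa_poly_def)

lemma miwa_poly_nth_above_degree: "k < r \<Longrightarrow> fps_nth (miwa_poly x k) r = 0"
proof (induction k arbitrary: r)
  case 0
  then show ?case by (simp add: miwa_poly_def)
next
  case (Suc k)
  have "miwa_poly x (Suc k) = miwa_poly x k - fps_const (x (Suc k)) * (fps_X * miwa_poly x k)"
    by (simp add: miwa_poly_Suc algebra_simps)
  then show ?case
    using Suc by simp
qed

lemma miwa_poly_times_hp_fps: "miwa_poly x k * (fps_exp 1 oo time_fps (tx k x)) = 1"
proof -
  let ?H = "fps_exp (1::complex) oo time_fps (tx k x)"
  have "fps_deriv (time_fps (tx k x)) = power_sums_fps x k"
    by (simp add: fps_eq_iff time_fps_def tx_def power_sums_fps_def del: of_nat_Suc)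
  then have deriv_H: "fps_deriv ?H = ?H * power_sums_fps x k"
    using fps_compose_deriv[of "time_fps (tx k x)" "fps_exp 1"] by (simp add: time_fps_def)
  have "fps_deriv (miwa_poly x k * ?H) = 0"
    by (simp add: deriv_H fps_deriv_miwa_poly algebra_simps)
  then have "miwa_poly x k * ?H = fps_const (fps_nth (miwa_poly x k * ?H) 0)"
    using fps_deriv_eq_0_iff by blast
  also have "\<dots> = 1"
    by simp
  finally show ?thesis .
qed

lemma miwa_poly_hpi_convolution:
  assumes "k \<le> j"
  shows "(\<Sum>r=0..j. fps_nth (miwa_poly x k) r * hpi (a + int j - int r) (tx k x))
       = (if a + int j = 0 then 1 else 0)"
proof (cases "a + int j < 0")
  case True
  then show ?thesis by simp
next
  case False
  define M where "M = nat (a + int j)"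
  have M: "a + int j = int M"
    using False by (simp add: M_def)
  let ?g = "\<lambda>r. fps_nth (miwa_poly x k) r * hpi (int M - int r) (tx k x)"
  have "(\<Sum>r=0..j. ?g r) = (\<Sum>r=0..min j M. ?g r)"
    by (rule sum.mono_neutral_right) auto
  also have "\<dots> = (\<Sum>r=0..M. ?g r)"
    by (rule sum.mono_neutral_left) (use assms in \<open>auto simp: miwa_poly_nth_above_degree\<close>)
  also have "\<dots> = (\<Sum>r=0..M. fps_nth (miwa_poly x k) r * hp (M - r) (tx k x))"
    by (intro sum.cong) (auto simp: hpi_def nat_diff_distrib)
  also have "\<dots> = fps_nth (miwa_poly x k * (fps_exp 1 oo time_fps (tx k x))) M"
    by (simp add: fps_mult_nth hp_time_fps)
  also have "\<dots> = (if M = 0 then 1 else 0)"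
    by (simp add: miwa_poly_times_hp_fps)
  finally show ?thesis
    by (simp add: M)
qed

text \<open>Since \<open>miwa_poly x k\<close> inverts the generating series of the \<open>hp m (tx k x)\<close> and has degree
  at most \<open>k\<close>, right multiplication by its unitriangular Toeplitz matrix turns every column
  \<open>j \<ge> k\<close> of a Jacobi--Trudi matrix into a unit vector.\<close>

definition miwa_toeplitz :: "(nat \<Rightarrow> complex) \<Rightarrow> nat \<Rightarrow> nat \<Rightarrow> complex mat" where
  "miwa_toeplitz x k n = mat n n (\<lambda>(j', j). if j' \<le> j then fps_nth (miwa_poly x k) (j - j') else 0)"

lemma det_miwa_toeplitz: "det (miwa_toeplitz x k n) = 1"
proof -
  have "det (miwa_toeplitz x k n) = prod_list (diag_mat (miwa_toeplitz x k n))"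
    by (rule det_upper_triangular) (auto simp: upper_triangular_def miwa_toeplitz_def)
  moreover have "diag_mat (miwa_toeplitz x k n) = replicate n 1"
    by (auto simp: diag_mat_def miwa_toeplitz_def intro: nth_equalityI)
  ultimately show ?thesis by simp
qed

lemma jt_mat_times_miwa_toeplitz:
  assumes "i < n" "j < n" "k \<le> j"
  shows "(mat n n (\<lambda>(i, j). hpi (c i + int j) (tx k x)) * miwa_toeplitz x k n) $$ (i, j)
       = (if c i + int j = 0 then 1 else 0)"
proof -
  have "(mat n n (\<lambda>(i, j). hpi (c i + int j) (tx k x)) * miwa_toeplitz x k n) $$ (i, j)
      = (\<Sum>j'\<in>{0..<n}. hpi (c i + int j') (tx k x) *
          (if j' \<le> j then fps_nth (miwa_poly x k) (j - j') else 0))"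
    using assms by (simp add: miwa_toeplitz_def scalar_prod_def)
  also have "\<dots> = (\<Sum>j'\<in>{0..j}. hpi (c i + int j') (tx k x) * fps_nth (miwa_poly x k) (j - j'))"
    by (rule sum.mono_neutral_cong_right) (use assms in auto)
  also have "\<dots> = (\<Sum>r=0..j. fps_nth (miwa_poly x k) r * hpi (c i + int j - int r) (tx k x))"
    by (rule sum.reindex_bij_witness[where i="\<lambda>r. j - r" and j="\<lambda>j'. j - j'"]) (auto simp: of_nat_diff)
  also have "\<dots> = (if c i + int j = 0 then 1 else 0)"
    by (rule miwa_poly_hpi_convolution[OF assms(3)])
  finally show ?thesis .
qed

lemma jt_det_tx_nonzero_imp:
  assumes "jt_det n c (tx k x) \<noteq> 0"
  obtains \<sigma> where "\<sigma> permutes {0..<n}" "\<And>i. i < n \<Longrightarrow> k \<le> \<sigma> i \<Longrightarrow> c i = - int (\<sigma> i)"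
proof -
  define M where "M = mat n n (\<lambda>(i, j). hpi (c i + int j) (tx k x)) * miwa_toeplitz x k n"
  have M_carrier: "M \<in> carrier_mat n n"
    unfolding M_def miwa_toeplitz_def by (rule mult_carrier_mat) auto
  have "det M = jt_det n c (tx k x) * det (miwa_toeplitz x k n)"
    unfolding M_def jt_det_def by (rule det_mult) (auto simp: miwa_toeplitz_def)
  then have "det M = jt_det n c (tx k x)"
    by (simp add: det_miwa_toeplitz)
  then have "(\<Sum>p\<in>{p. p permutes {0..<n}}. signof p * (\<Prod>i = 0..<n. M $$ (i, p i))) \<noteq> 0"
    using assms by (simp add: det_def'[OF M_carrier])
  then obtain \<sigma> where \<sigma>: "\<sigma> permutes {0..<n}" "(\<Prod>i = 0..<n. M $$ (i, \<sigma> i)) \<noteq> 0"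
    by (auto elim: sum.not_neutral_contains_not_neutral)
  have "c i = - int (\<sigma> i)" if "i < n" "k \<le> \<sigma> i" for i
  proof -
    have "\<sigma> i < n"
      using \<sigma>(1) that(1) permutes_in_image by fastforce
    moreover have "M $$ (i, \<sigma> i) \<noteq> 0"
      using \<sigma>(2) that(1) by (auto simp: prod_zero_iff)
    ultimately show ?thesis
      using jt_mat_times_miwa_toeplitz[OF that(1) _ that(2), of c x] by (auto simp: M_def split: if_splits)
  qed
  with \<sigma>(1) show thesis
    using that by blast
qed

section \<open>Which shifted determinants survive\<close>

lemma is_partition_nth_antimono:
  "is_partition mu \<Longrightarrow> i \<le> j \<Longrightarrow> j < length mu \<Longrightarrow> mu ! j \<le> mu ! i"
  unfolding is_partition_def
  by (cases "i = j") (auto dest: sorted_wrt_nth_less[of "\<lambda>x y. y \<le> x" mu i j])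

lemma is_partition_nth_pos: "is_partition mu \<Longrightarrow> i < length mu \<Longrightarrow> 0 < mu ! i"
  unfolding is_partition_def by (metis gr0I nth_mem)

lemma dominating_partition:
  assumes "is_partition lam" "mu = lam \<or> plt lam mu"
  shows "length lam \<le> length mu" "\<And>i. i < length lam \<Longrightarrow> lam ! i \<le> mu ! i"
proof -
  have part_le: "part lam i \<le> part mu i" for i
    using assms(2) by (auto simp: plt_def)
  show length_le: "length lam \<le> length mu"
  proof (cases "length lam")
    case (Suc l')
    have "0 < part lam l'"
      using is_partition_nth_pos[OF assms(1), of l'] Suc by (simp add: part_def)
    then have "0 < part mu l'"
      using part_le[of l'] by linarith
    then show ?thesis
      using Suc by (simp add: part_def split: if_splits)
  qed simp
  show "lam ! i \<le> mu ! i" if "i < length lam" for i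
    using part_le[of i] that length_le by (simp add: part_def)
qed

lemma permutes_bij_betw_final_segment:
  fixes \<sigma> :: "nat \<Rightarrow> nat"
  assumes "\<sigma> permutes {0..<n}"
  shows "bij_betw \<sigma> {i\<in>{0..<n}. k \<le> \<sigma> i} {k..<n}"
proof -
  have "\<sigma> ` {i\<in>{0..<n}. k \<le> \<sigma> i} = {j\<in>\<sigma> ` {0..<n}. k \<le> j}"
    by blast
  also have "\<dots> = {j\<in>{0..<n}. k \<le> j}"
    by (simp only: permutes_image[OF assms])
  also have "\<dots> = {k..<n}"
    by auto
  moreover have "inj_on \<sigma> {i\<in>{0..<n}. k \<le> \<sigma> i}"
    using permutes_inj[OF assms] by (simp add: inj_on_def inj_def)
  ultimately show ?thesis
    by (simp add: bij_betw_def)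
qed

lemma sum_final_segment_le:
  fixes f :: "nat \<Rightarrow> int"
  assumes S: "S \<subseteq> {0..<n}" and cS: "card S = n - k" and kn: "k \<le> n"
    and mono: "\<And>i j. i \<le> j \<Longrightarrow> j < n \<Longrightarrow> f j + int j \<le> f i + int i"
  shows "sum f {k..<n} + int (card (S - {k..<n})) \<le> sum f S"
proof (cases "k = n")
  case True
  have "finite S" using S finite_subset by blast
  then have "S = {}" using cS True by simp
  then show ?thesis using True by simp
next
  case False
  then have kn': "k < n" using kn by simp
  define T where "T = {k..<n}"
  have fS: "finite S" using S finite_subset by blast
  have fT: "finite T" by (simp add: T_def)
  have s1: "sum f S = sum f (S \<inter> T) + sum f (S - T)"
    using fS by (rule sum.Int_Diff)
  have s2: "sum f T = sum f (S \<inter> T) + sum f (T - S)"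
    using fT sum.Int_Diff[of T f S] by (simp add: Int_commute)
  have c1: "card S = card (S \<inter> T) + card (S - T)"
    using fS by (rule card_Int_Diff)
  have c2: "card T = card (S \<inter> T) + card (T - S)"
    using fT card_Int_Diff[of T S] by (simp add: Int_commute)
  have cT: "card T = n - k" by (simp add: T_def)
  have ceq: "card (S - T) = card (T - S)" using c1 c2 cT cS by simp
  have lo: "f k + 1 \<le> f i" if "i \<in> S - T" for i
  proof -
    have "i < k" using that S by (auto simp: T_def)
    then show ?thesis using mono[of i k] kn' by simp
  qed
  have hi: "f j \<le> f k" if "j \<in> T - S" for j
  proof -
    have "k \<le> j" "j < n" using that by (auto simp: T_def)
    then show ?thesis using mono[of k j] by simp
  qed
  have "of_nat (card (S - T)) * (f k + 1) \<le> sum f (S - T)"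
    by (rule sum_bounded_below) (use lo in auto)
  moreover have "sum f (T - S) \<le> of_nat (card (T - S)) * f k"
    by (rule sum_bounded_above) (use hi in auto)
  ultimately show ?thesis using s1 s2 ceq unfolding T_def[symmetric]
    by (simp add: algebra_simps)
qed

lemma jt_support_slack_zero:
  fixes a :: "nat \<Rightarrow> nat"
  assumes lam: "length lam = l" "k \<le> l"
    and mu: "is_partition mu" "length mu = n" "l \<le> n" "\<And>i. i < l \<Longrightarrow> lam ! i \<le> mu ! i"
    and a_sum: "(\<Sum>i\<in>{0..<n}. a i) = Nlk lam k"
    and \<sigma>: "\<sigma> permutes {0..<n}"
    and \<sigma>_rows: "\<And>i. i < n \<Longrightarrow> k \<le> \<sigma> i \<Longrightarrow> int (mu ! i) - int i - int (a i) = - int (\<sigma> i)"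
  shows "(\<Sum>j\<in>{k..<l}. mu ! j - lam ! j) + (\<Sum>j\<in>{l..<n}. mu ! j)
       + (\<Sum>i\<in>{i\<in>{0..<n}. \<sigma> i < k}. a i) + card ({i\<in>{0..<n}. k \<le> \<sigma> i} - {k..<n}) = 0"
proof -
  define S where "S = {i\<in>{0..<n}. k \<le> \<sigma> i}"
  define T where "T = {k..<n}"
  define f where "f i = int (mu ! i) - int i" for i
  have bij: "bij_betw \<sigma> S T"
    unfolding S_def T_def by (rule permutes_bij_betw_final_segment[OF \<sigma>])
  have S_card: "card S = n - k"
    using bij_betw_same_card[OF bij] by (simp add: T_def)
  have a_on_S: "(\<Sum>i\<in>S. int (a i)) = sum f S + (\<Sum>j\<in>T. int j)"
  proof -
    have "int (a i) = f i + int (\<sigma> i)" if "i \<in> S" for i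
      using \<sigma>_rows[of i] that by (simp add: S_def f_def)
    then have "(\<Sum>i\<in>S. int (a i)) = (\<Sum>i\<in>S. f i + int (\<sigma> i))"
      by (intro sum.cong) auto
    then show ?thesis
      by (simp add: sum.distrib sum.reindex_bij_betw[OF bij])
  qed
  have exchange: "sum f T + int (card (S - T)) \<le> sum f S"
    unfolding T_def
  proof (rule sum_final_segment_le)
    show "f j + int j \<le> f i + int i" if "i \<le> j" "j < n" for i j
      using is_partition_nth_antimono[OF mu(1) that(1)] that mu(2) by (simp add: f_def)
  qed (use S_card lam mu(3) in \<open>auto simp: S_def\<close>)
  have "sum f T + (\<Sum>j\<in>T. int j) = (\<Sum>j\<in>{k..<l}. int (mu ! j)) + (\<Sum>j\<in>{l..<n}. int (mu ! j))"
    unfolding T_def f_def using lam mu(3)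
    by (simp add: sum.distrib[symmetric] sum.atLeastLessThan_concat)
  moreover have "(\<Sum>j\<in>{k..<l}. int (mu ! j)) = int (Nlk lam k) + int (\<Sum>j\<in>{k..<l}. mu ! j - lam ! j)"
    using lam mu(4) by (simp add: Nlk_def of_nat_diff sum.distrib[symmetric])
  moreover have "int (Nlk lam k) = (\<Sum>i\<in>S. int (a i)) + int (\<Sum>i\<in>{i\<in>{0..<n}. \<sigma> i < k}. a i)"
  proof -
    have "{0..<n} = S \<union> {i\<in>{0..<n}. \<sigma> i < k}" "S \<inter> {i\<in>{0..<n}. \<sigma> i < k} = {}"
      by (auto simp: S_def)
    then show ?thesis
      unfolding a_sum[symmetric] of_nat_sum by (metis finite_atLeastLessThan finite_Un sum.union_disjoint)
  qed
  ultimately have "int ((\<Sum>j\<in>{k..<l}. mu ! j - lam ! j) + (\<Sum>j\<in>{l..<n}. mu ! j)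
       + (\<Sum>i\<in>{i\<in>{0..<n}. \<sigma> i < k}. a i) + card (S - T)) \<le> 0"
    using a_on_S exchange by (simp add: of_nat_sum)
  then show ?thesis
    by (simp only: of_nat_le_0_iff S_def T_def)
qed

lemma jt_support:
  fixes a :: "nat \<Rightarrow> nat"
  assumes lam: "is_partition lam" "length lam = l" "k \<le> l"
    and mu: "is_partition mu" "mu = lam \<or> plt lam mu" "length mu = n"
    and a_sum: "(\<Sum>i\<in>{0..<n}. a i) = Nlk lam k"
    and \<sigma>: "\<sigma> permutes {0..<n}"
    and \<sigma>_rows: "\<And>i. i < n \<Longrightarrow> k \<le> \<sigma> i \<Longrightarrow> int (mu ! i) - int i - int (a i) = - int (\<sigma> i)"
  shows "n = l" and "\<And>i. i \<in> {k..<l} \<Longrightarrow> mu ! i = lam ! i" and "\<And>i. i < k \<Longrightarrow> a i = 0"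
    and "\<And>i. i < n \<Longrightarrow> k \<le> \<sigma> i \<longleftrightarrow> k \<le> i"
proof -
  have l_le_n: "l \<le> n" and dom: "\<And>i. i < l \<Longrightarrow> lam ! i \<le> mu ! i"
    using dominating_partition[OF lam(1) mu(2)] lam(2) mu(3) by auto
  define S where "S = {i\<in>{0..<n}. k \<le> \<sigma> i}"
  have "(\<Sum>j\<in>{k..<l}. mu ! j - lam ! j) = 0" "(\<Sum>j\<in>{l..<n}. mu ! j) = 0"
      "(\<Sum>i\<in>{i\<in>{0..<n}. \<sigma> i < k}. a i) = 0" "card (S - {k..<n}) = 0"
    using jt_support_slack_zero[OF lam(2,3) mu(1,3) l_le_n dom a_sum \<sigma> \<sigma>_rows]
    unfolding S_def by (simp_all only: add_is_0)
  then have slack: "\<And>j. j \<in> {k..<l} \<Longrightarrow> mu ! j \<le> lam ! j" "\<And>j. j \<in> {l..<n} \<Longrightarrow> mu ! j = 0"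
      "\<And>i. i < n \<Longrightarrow> \<sigma> i < k \<Longrightarrow> a i = 0" "S \<subseteq> {k..<n}"
    by (simp_all add: sum_eq_0_iff S_def)
  show "mu ! i = lam ! i" if "i \<in> {k..<l}" for i
    using slack(1)[OF that] dom[of i] that by simp
  have "card S = card {k..<n}"
    unfolding S_def by (rule bij_betw_same_card[OF permutes_bij_betw_final_segment[OF \<sigma>]])
  with slack(4) have S: "S = {k..<n}"
    by (intro card_subset_eq) auto
  show "n = l"
  proof (rule ccontr)
    assume "n \<noteq> l"
    then have "mu ! l = 0"
      using slack(2)[of l] l_le_n by simp
    then show False
      using is_partition_nth_pos[OF mu(1), of l] mu(3) l_le_n \<open>n \<noteq> l\<close> by simp
  qed
  show "k \<le> \<sigma> i \<longleftrightarrow> k \<le> i" if "i < n" for i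
  proof -
    have "i \<in> S \<longleftrightarrow> i \<in> {k..<n}"
      by (simp only: S)
    then show ?thesis
      using that by (simp add: S_def)
  qed
  show "a i = 0" if "i < k" for i
  proof -
    have "i \<notin> S" "i < n"
      using that lam(3) l_le_n by (simp_all add: S)
    then show ?thesis
      using slack(3)[of i] by (simp add: S_def)
  qed
qed

lemma permutes_neq_ex_less:
  fixes \<sigma> \<rho> :: "nat \<Rightarrow> nat"
  assumes \<sigma>: "\<sigma> permutes A" and \<rho>: "\<rho> permutes A" and "finite A" "\<sigma> \<noteq> \<rho>"
  shows "\<exists>i\<in>A. \<sigma> i < \<rho> i"
proof (rule ccontr)
  assume "\<not> (\<exists>i\<in>A. \<sigma> i < \<rho> i)"
  then have ge: "\<forall>i\<in>A. \<rho> i \<le> \<sigma> i"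
    by (auto simp: not_less)
  have sums: "sum \<sigma> A = sum \<rho> A"
    using sum.permute[OF \<sigma>, of id] sum.permute[OF \<rho>, of id] by simp
  have "\<forall>i\<in>A. \<sigma> i = \<rho> i"
  proof (rule ccontr)
    assume "\<not> (\<forall>i\<in>A. \<sigma> i = \<rho> i)"
    then obtain i where "i \<in> A" "\<rho> i < \<sigma> i"
      using ge by force
    then have "sum \<rho> A < sum \<sigma> A"
      using ge by (intro sum_strict_mono_ex1[OF \<open>finite A\<close>]) auto
    then show False
      using sums by simp
  qed
  moreover have "\<forall>i. i \<notin> A \<longrightarrow> \<sigma> i = \<rho> i"
    using permutes_not_in[OF \<sigma>] permutes_not_in[OF \<rho>] by simp
  ultimately show False
    using \<open>\<sigma> \<noteq> \<rho>\<close> by (metis ext)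
qed

lemma det_perm_shifted_mat:
  fixes f :: "int \<Rightarrow> 'a :: comm_ring_1"
  assumes \<rho>: "\<rho> permutes {0..<m}" and "f 0 = 1" and "\<And>z. z < 0 \<Longrightarrow> f z = 0"
  shows "det (mat m m (\<lambda>(i, j). f (int j - int (\<rho> i)))) = signof \<rho>"
proof -
  let ?A = "mat m m (\<lambda>(i, j). f (int j - int (\<rho> i)))"
  let ?g = "\<lambda>p. signof p * (\<Prod>i = 0..<m. ?A $$ (i, p i))"
  have other_perms: "?g p = 0" if p: "p permutes {0..<m}" "p \<noteq> \<rho>" for p
  proof -
    obtain i where i: "i < m" "p i < \<rho> i"
      using permutes_neq_ex_less[OF p(1) \<rho> _ p(2)] by auto
    then have "?A $$ (i, p i) = 0"
      using permutes_in_image[OF p(1)] assms(3) by simp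
    then have "(\<Prod>i = 0..<m. ?A $$ (i, p i)) = 0"
      using i by (intro prod_zero) auto
    then show ?thesis
      by simp
  qed
  have "det ?A = (\<Sum>p\<in>{p. p permutes {0..<m}}. ?g p)"
    by (rule det_def') simp
  also have "\<dots> = (\<Sum>p\<in>{\<rho>}. ?g p)"
    using \<rho> other_perms by (intro sum.mono_neutral_right) (auto simp: finite_permutations)
  also have "\<dots> = signof \<rho>"
    using permutes_in_image[OF \<rho>] assms(2) by simp
  finally show ?thesis .
qed

lemma jt_det_block_triangular:
  assumes len: "length mu = l" and kl: "k \<le> l" and \<rho>: "\<rho> permutes {0..<l-k}"
    and upper: "\<And>i. i < k \<Longrightarrow> c i = int (mu ! i) - int i"
    and lower: "\<And>i. i \<in> {k..<l} \<Longrightarrow> c i = - int (k + \<rho> (i - k))"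
  shows "jt_det l c t = signof \<rho> * schur (take k mu) t"
proof -
  define m where "m = l - k"
  have lkm: "l = k + m"
    using kl by (simp add: m_def)
  define A where "A = mat k k (\<lambda>(i, j). hpi (c i + int j) t)"
  define B where "B = mat k m (\<lambda>(i, j). hpi (c i + int (k + j)) t)"
  define D where "D = mat m m (\<lambda>(i, j). hpi (int j - int (\<rho> i)) t)"
  have blocks: "mat l l (\<lambda>(i, j). hpi (c i + int j) t) = four_block_mat A B (0\<^sub>m m k) D"
  proof (rule eq_matI)
    fix i j
    assume "i < dim_row (four_block_mat A B (0\<^sub>m m k) D)" "j < dim_col (four_block_mat A B (0\<^sub>m m k) D)"
    then have i: "i < l" and j: "j < l"
      by (auto simp: A_def D_def lkm)
    show "mat l l (\<lambda>(i, j). hpi (c i + int j) t) $$ (i, j) = four_block_mat A B (0\<^sub>m m k) D $$ (i, j)"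
    proof (cases "i < k")
      case True
      then show ?thesis
        using i j by (auto simp: four_block_mat_def A_def B_def D_def lkm)
    next
      case False
      then show ?thesis
        using i j lower[of i]
        by (auto simp: four_block_mat_def A_def B_def D_def lkm intro!: arg_cong2[where f=hpi])
    qed
  qed (auto simp: A_def D_def lkm)
  have "jt_det l c t = det A * det D"
    unfolding jt_det_def blocks
    by (rule det_four_block_mat_lower_left_zero) (auto simp: A_def B_def D_def)
  also have "det D = signof \<rho>"
    unfolding D_def using \<rho> by (intro det_perm_shifted_mat) (auto simp: m_def hpi_def)
  also have "det A = schur (take k mu) t"
    unfolding A_def schur_def using len kl upper
    by (auto intro!: arg_cong[where f=det] eq_matI simp: min_def)
  finally show ?thesis by simp
qed

text \<open>The letter counts of the words that lower each row \<open>i \<ge> k\<close> of the matrix of \<open>s\<^sub>\<lambda>\<close>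
  to \<open>-(k + \<rho> (i - k))\<close>, i.e. onto the \<open>\<rho>\<close>-permuted unit columns.\<close>

definition perm_counts :: "nat list \<Rightarrow> nat \<Rightarrow> (nat \<Rightarrow> nat) \<Rightarrow> nat \<Rightarrow> int" where
  "perm_counts lam k \<rho> i = (if i < k then 0 else int (lam ! i) - int (i - k) + int (\<rho> (i - k)))"

lemma perm_counts_inj:
  assumes "\<rho> permutes {0..<l - k}" "\<rho>' permutes {0..<l - k}" "k \<le> l"
    and "\<And>i. i < l \<Longrightarrow> perm_counts lam k \<rho> i = perm_counts lam k \<rho>' i"
  shows "\<rho> = \<rho>'"
proof
  fix r
  show "\<rho> r = \<rho>' r"
  proof (cases "r < l - k")
    case True
    then show ?thesis
      using assms(4)[of "k + r"] assms(3) by (simp add: perm_counts_def)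
  next
    case False
    then show ?thesis
      using permutes_not_in[OF assms(1)] permutes_not_in[OF assms(2)] by simp
  qed
qed

lemma permutes_restrict_shift:
  fixes \<sigma> :: "nat \<Rightarrow> nat"
  assumes \<sigma>: "\<sigma> permutes {0..<k + m}" and stable: "\<And>i. i < k + m \<Longrightarrow> k \<le> \<sigma> i \<longleftrightarrow> k \<le> i"
  shows "(\<lambda>r. if r < m then \<sigma> (k + r) - k else r) permutes {0..<m}"
proof -
  define \<rho> where "\<rho> r = (if r < m then \<sigma> (k + r) - k else r)" for r
  have "inj_on \<rho> {0..<m}"
  proof (rule inj_onI)
    fix r r'
    assume rr: "r \<in> {0..<m}" "r' \<in> {0..<m}" "\<rho> r = \<rho> r'"
    have "k \<le> \<sigma> (k + r)" "k \<le> \<sigma> (k + r')"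
      using stable[of "k + r"] stable[of "k + r'"] rr(1,2) by auto
    then have "\<sigma> (k + r) = \<sigma> (k + r')"
      using rr by (simp add: \<rho>_def)
    then show "r = r'"
      using permutes_inj[OF \<sigma>] by (simp add: inj_eq)
  qed
  moreover have "\<rho> ` {0..<m} \<subseteq> {0..<m}"
  proof
    fix s
    assume "s \<in> \<rho> ` {0..<m}"
    then obtain r where r: "r < m" "s = \<rho> r"
      by auto
    moreover have "\<sigma> (k + r) < k + m"
      using permutes_in_image[OF \<sigma>] r(1) by simp
    ultimately show "s \<in> {0..<m}"
      by (simp add: \<rho>_def)
  qed
  ultimately have "bij_betw \<rho> {0..<m} {0..<m}"
    by (simp add: bij_betw_def endo_inj_surj)
  then show ?thesis
    unfolding \<rho>_def[symmetric] by (rule bij_imp_permutes) (simp add: \<rho>_def)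
qed

lemma jt_det_word_perm_counts:
  assumes "length mu = l" "k \<le> l" "\<And>i. i \<in> {k..<l} \<Longrightarrow> mu ! i = lam ! i"
    and \<rho>: "\<rho> permutes {0..<l - k}"
    and counts: "\<And>i. i < l \<Longrightarrow> int (count (mset xs) i) = perm_counts lam k \<rho> i"
  shows "jt_det l (\<lambda>i. int (mu ! i) - int i - int (count (mset xs) i)) t = signof \<rho> * schur (take k mu) t"
proof (rule jt_det_block_triangular[OF assms(1,2) \<rho>])
  show "int (mu ! i) - int i - int (count (mset xs) i) = int (mu ! i) - int i" if "i < k" for i
    using counts[of i] that assms(2) by (simp add: perm_counts_def)
  show "int (mu ! i) - int i - int (count (mset xs) i) = - int (k + \<rho> (i - k))" if "i \<in> {k..<l}" for i
    using counts[of i] that assms(3)[of i] by (simp add: perm_counts_def of_nat_diff)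
qed

lemma jt_det_word_tx_nonzero_imp:
  assumes lam: "is_partition lam" "length lam = l" "k \<le> l"
    and mu: "is_partition mu" "mu = lam \<or> plt lam mu" "length mu = l"
      "\<And>i. i \<in> {k..<l} \<Longrightarrow> mu ! i = lam ! i"
    and xs: "xs \<in> words (Nlk lam k) l"
    and nonzero: "jt_det l (\<lambda>i. int (mu ! i) - int i - int (count (mset xs) i)) (tx k x) \<noteq> 0"
  obtains \<rho> where "\<rho> permutes {0..<l - k}" "\<And>i. i < l \<Longrightarrow> int (count (mset xs) i) = perm_counts lam k \<rho> i"
proof -
  obtain \<sigma> where \<sigma>: "\<sigma> permutes {0..<l}"
    and \<sigma>_rows: "\<And>i. i < l \<Longrightarrow> k \<le> \<sigma> i \<Longrightarrow> int (mu ! i) - int i - int (count (mset xs) i) = - int (\<sigma> i)"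
    using jt_det_tx_nonzero_imp[OF nonzero] by blast
  have "(\<Sum>i\<in>{0..<l}. count (mset xs) i) = Nlk lam k"
    using xs sum_count_mset[of xs "{0..<l}"] by (simp add: words_def)
  note support = jt_support[OF lam mu(1-3) this \<sigma> \<sigma>_rows]
  define \<rho> where "\<rho> r = (if r < l - k then \<sigma> (k + r) - k else r)" for r
  have "\<rho> permutes {0..<l - k}"
    unfolding \<rho>_def using \<sigma> support(4) lam(3) by (intro permutes_restrict_shift) auto
  moreover have "int (count (mset xs) i) = perm_counts lam k \<rho> i" if "i < l" for i
  proof (cases "i < k")
    case True
    then show ?thesis
      using support(3) by (simp add: perm_counts_def)
  next
    case False
    then have "k \<le> \<sigma> i" "\<rho> (i - k) = \<sigma> i - k"
      using support(4) that by (auto simp: \<rho>_def)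
    then show ?thesis
      using \<sigma>_rows[OF that] False mu(4)[of i] that by (simp add: perm_counts_def of_nat_diff)
  qed
  ultimately show thesis
    using that by blast
qed

lemma jt_det_word_tx:
  assumes lam: "is_partition lam" "length lam = l" "k \<le> l"
    and mu: "is_partition mu" "mu = lam \<or> plt lam mu" "length mu = l"
      "\<And>i. i \<in> {k..<l} \<Longrightarrow> mu ! i = lam ! i"
    and xs: "xs \<in> words (Nlk lam k) l"
  shows "jt_det l (\<lambda>i. int (mu ! i) - int i - int (count (mset xs) i)) (tx k x) =
    (\<Sum>\<rho>\<in>{\<rho>. \<rho> permutes {0..<l - k}}. if \<forall>i<l. int (count (mset xs) i) = perm_counts lam k \<rho> i
        then signof \<rho> * schur (take k mu) (tx k x) else 0)"
    (is "?lhs = (\<Sum>\<rho>\<in>?P. if ?counts \<rho> then signof \<rho> * ?s else 0)")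
proof (cases "\<exists>\<rho>\<in>?P. ?counts \<rho>")
  case True
  then obtain \<rho> where \<rho>: "\<rho> \<in> ?P" "?counts \<rho>"
    by blast
  have "?counts \<rho>' \<longleftrightarrow> \<rho>' = \<rho>" if "\<rho>' \<in> ?P" for \<rho>'
  proof
    assume counts: "?counts \<rho>'"
    show "\<rho>' = \<rho>"
    proof (rule perm_counts_inj)
      show "perm_counts lam k \<rho>' i = perm_counts lam k \<rho> i" if "i < l" for i
        using spec[OF counts, of i] spec[OF \<rho>(2), of i] that by simp
    qed (use that \<rho>(1) lam(3) in simp_all)
  qed (use \<rho>(2) in simp)
  then have "(\<Sum>\<rho>'\<in>?P. if ?counts \<rho>' then signof \<rho>' * ?s else 0)
      = (\<Sum>\<rho>'\<in>?P. if \<rho>' = \<rho> then signof \<rho> * ?s else 0)"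
    by (intro sum.cong) auto
  also have "\<dots> = signof \<rho> * ?s"
    using \<rho>(1) by (simp add: finite_permutations)
  also have "\<dots> = ?lhs"
    using \<rho> mu(4) by (intro jt_det_word_perm_counts[symmetric] mu(3) lam(3)) auto
  finally show ?thesis ..
next
  case False
  then have "?lhs = 0"
    using jt_det_word_tx_nonzero_imp[OF lam mu xs] by blast
  moreover have "(\<Sum>\<rho>\<in>?P. if ?counts \<rho> then signof \<rho> * ?s else 0) = 0"
    using False by (intro sum.neutral) auto
  ultimately show ?thesis
    by simp
qed

section \<open>Counting words and the constant\<close>

lemma card_words_with_counts:
  fixes a :: "nat \<Rightarrow> nat"
  assumes "(\<Sum>i\<in>{0..<n}. a i) = N"
  shows "card {xs \<in> words N n. \<forall>i<n. count (mset xs) i = a i} * (\<Prod>i\<in>{0..<n}. fact (a i)) = fact N"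
proof -
  define M where "M = (\<Sum>i\<in>{0..<n}. replicate_mset (a i) i)"
  have count_M: "count M j = (if j < n then a j else 0)" for j
    by (simp add: M_def count_sum)
  have set_M: "set_mset M \<subseteq> {0..<n}"
    using count_M by (auto simp: set_mset_def split: if_splits)
  have size_M: "size M = N"
    using assms by (simp add: M_def)
  have "{xs \<in> words N n. \<forall>i<n. count (mset xs) i = a i} = permutations_of_multiset M"
  proof (rule Set.set_eqI, rule iffI)
    fix xs
    assume xs: "xs \<in> {xs \<in> words N n. \<forall>i<n. count (mset xs) i = a i}"
    then have "count (mset xs) j = count M j" for j
      using count_M by (cases "j < n") (auto simp: words_def count_mset_0_iff)
    then show "xs \<in> permutations_of_multiset M"
      by (simp add: permutations_of_multiset_def multiset_eqI)
  next
    fix xs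
    assume "xs \<in> permutations_of_multiset M"
    then have "mset xs = M"
      by (simp add: permutations_of_multiset_def)
    then show "xs \<in> {xs \<in> words N n. \<forall>i<n. count (mset xs) i = a i}"
      using set_M size_M count_M by (auto simp: words_def simp flip: set_mset_mset size_mset)
  qed
  moreover have "(\<Prod>x\<in>set_mset M. fact (count M x)) = (\<Prod>i\<in>{0..<n}. fact (a i) :: nat)"
  proof -
    have "(\<Prod>x\<in>set_mset M. fact (count M x)) = (\<Prod>i\<in>{0..<n}. fact (count M i) :: nat)"
      by (rule prod.mono_neutral_left) (use set_M in \<open>auto simp: not_in_iff\<close>)
    also have "\<dots> = (\<Prod>i\<in>{0..<n}. fact (a i))"
      using count_M by (intro prod.cong) auto
    finally show ?thesis .
  qed
  ultimately show ?thesis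
    using card_permutations_of_multiset_aux[of M] size_M by simp
qed

definition inv_fact :: "int \<Rightarrow> complex" where
  "inv_fact z = (if z < 0 then 0 else 1 / fact (nat z))"

lemma card_words_with_int_counts:
  fixes a :: "nat \<Rightarrow> int"
  assumes sum_a: "(\<Sum>i\<in>{0..<n}. a i) = int N"
  shows "of_nat (card {xs \<in> words N n. \<forall>i<n. int (count (mset xs) i) = a i})
       = fact N * (\<Prod>i\<in>{0..<n}. inv_fact (a i))"
proof (cases "\<exists>i<n. a i < 0")
  case True
  then obtain i where i: "i < n" "a i < 0"
    by blast
  then have "{xs \<in> words N n. \<forall>i<n. int (count (mset xs) i) = a i} = {}"
    by force
  moreover have "(\<Prod>i\<in>{0..<n}. inv_fact (a i)) = 0"
    using i by (intro prod_zero) (auto simp: inv_fact_def)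
  ultimately show ?thesis
    by (metis card.empty mult_zero_right of_nat_0)
next
  case False
  then have nonneg: "\<And>i. i < n \<Longrightarrow> int (nat (a i)) = a i"
    by fastforce
  have "int (\<Sum>i\<in>{0..<n}. nat (a i)) = int N"
    unfolding of_nat_sum sum_a[symmetric] using nonneg by (intro sum.cong) auto
  then have "(\<Sum>i\<in>{0..<n}. nat (a i)) = N"
    by (simp only: of_nat_eq_iff)
  note card = card_words_with_counts[OF this]
  define F where "F = (\<Prod>i\<in>{0..<n}. fact (nat (a i)) :: complex)"
  have "F \<noteq> 0"
    by (simp add: F_def)
  have "{xs \<in> words N n. \<forall>i<n. int (count (mset xs) i) = a i}
      = {xs \<in> words N n. \<forall>i<n. count (mset xs) i = nat (a i)}"
    using nonneg by force
  moreover have "(\<Prod>i\<in>{0..<n}. inv_fact (a i)) = 1 / F"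
    using False by (simp add: F_def inv_fact_def prod_dividef)
  moreover have "of_nat (card {xs \<in> words N n. \<forall>i<n. count (mset xs) i = nat (a i)}) = fact N / F"
    using arg_cong[OF card, of "of_nat :: nat \<Rightarrow> complex"] \<open>F \<noteq> 0\<close>
    by (simp add: F_def of_nat_prod eq_divide_eq)
  ultimately show ?thesis
    by simp
qed


definition ffact :: "'a :: comm_ring_1 \<Rightarrow> nat \<Rightarrow> 'a" where
  "ffact x q = (\<Prod>u\<in>{0..<q}. x - of_nat u)"

lemma ffact_0 [simp]: "ffact x 0 = 1"
  by (simp add: ffact_def)

lemma ffact_Suc: "ffact x (Suc q) = ffact x q * (x - of_nat q)"
  by (simp add: ffact_def)

lemma ffact_of_nat_mult_fact:
  "q \<le> L \<Longrightarrow> ffact (of_nat L) q * of_nat (fact (L - q)) = (of_nat (fact L) :: 'a :: comm_ring_1)"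
proof (induction q)
  case (Suc q)
  have "L - q = Suc (L - Suc q)"
    using Suc.prems by simp
  then have "fact (L - q) = (L - q) * fact (L - Suc q)"
    by (simp only: fact_Suc) simp
  then have "ffact (of_nat L) (Suc q) * of_nat (fact (L - Suc q)) = ffact (of_nat L) q * (of_nat (fact (L - q)) :: 'a)"
    using Suc.prems by (simp add: ffact_Suc of_nat_diff mult_ac)
  then show ?case
    using Suc by simp
qed simp

lemma inv_fact_diff_eq_ffact: "inv_fact (int L - int q) = ffact (of_nat L) q / fact L"
proof (cases "q \<le> L")
  case True
  have "inv_fact (int L - int q) = 1 / fact (L - q)"
    using True by (simp add: inv_fact_def nat_diff_distrib)
  also have "\<dots> = ffact (of_nat L) q / fact L"
    using ffact_of_nat_mult_fact[OF True, where 'a=complex] by (simp add: field_simps)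
  finally show ?thesis .
next
  case False
  have "ffact (of_nat L :: complex) q = 0"
    unfolding ffact_def using False by (intro prod_zero) auto
  then show ?thesis
    using False by (simp add: inv_fact_def)
qed

definition ffact_vandermonde :: "nat \<Rightarrow> (nat \<Rightarrow> 'a :: idom) \<Rightarrow> 'a mat" where
  "ffact_vandermonde m y = mat m m (\<lambda>(r, s). ffact (y r) (m - 1 - s))"

lemma det_mat_scale_rows:
  "det (mat p p (\<lambda>(r, s). a r * f r s)) = (\<Prod>r\<in>{0..<p}. a r) * det (mat p p (\<lambda>(r, s). f r s))"
proof -
  have "det (mat p p (\<lambda>(r, s). a r * f r s)) =
     (\<Sum>q\<in>{q. q permutes {0..<p}}. signof q * (\<Prod>i = 0..<p. a i * f i (q i)))"
    by (subst det_def'[of _ p]) (auto intro!: sum.cong prod.cong simp: permutes_in_image)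
  also have "\<dots> = (\<Sum>q\<in>{q. q permutes {0..<p}}. (\<Prod>r\<in>{0..<p}. a r) * (signof q * (\<Prod>i = 0..<p. f i (q i))))"
    by (simp add: prod.distrib mult_ac)
  also have "\<dots> = (\<Prod>r\<in>{0..<p}. a r) * det (mat p p (\<lambda>(r, s). f r s))"
    by (subst det_def'[of _ p]) (auto simp: sum_distrib_left intro!: sum.cong prod.cong simp: permutes_in_image)
  finally show ?thesis .
qed

text \<open>Subtracting \<open>(y p - (p - 1 - s))\<close> times column \<open>s + 1\<close> from column \<open>s\<close> clears the last row
  of the falling-factorial Vandermonde matrix except for its final entry.\<close>

definition ffact_column_op :: "nat \<Rightarrow> (nat \<Rightarrow> 'a :: idom) \<Rightarrow> 'a mat" where
  "ffact_column_op p y = mat (Suc p) (Suc p) (\<lambda>(s', s).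
     (if s' = s then 1 else 0) + (if s' = Suc s then - (y p - of_nat (p - 1 - s)) else 0))"

lemma det_ffact_column_op: "det (ffact_column_op p y) = 1"
proof -
  have "det (ffact_column_op p y) = prod_list (diag_mat (ffact_column_op p y))"
    by (rule det_lower_triangular[of "Suc p"]) (auto simp: ffact_column_op_def)
  moreover have "diag_mat (ffact_column_op p y) = replicate (Suc p) 1"
    by (intro nth_equalityI) (simp_all add: diag_mat_def ffact_column_op_def del: upt_Suc replicate_Suc)
  ultimately show ?thesis by simp
qed

lemma ffact_vandermonde_times_column_op:
  "ffact_vandermonde (Suc p) y * ffact_column_op p y
     = four_block_mat (mat p p (\<lambda>(r, s). (y r - y p) * ffact (y r) (p - 1 - s))) (mat p 1 (\<lambda>_. 1))
         (0\<^sub>m 1 p) (1\<^sub>m 1)"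
  (is "?V * ?U = four_block_mat ?B ?C _ _")
proof (rule eq_matI)
  fix r s
  assume "r < dim_row (four_block_mat ?B ?C (0\<^sub>m 1 p) (1\<^sub>m 1))" "s < dim_col (four_block_mat ?B ?C (0\<^sub>m 1 p) (1\<^sub>m 1))"
  then have rs: "r < Suc p" "s < Suc p"
    by auto
  have "(?V * ?U) $$ (r, s) = ffact (y r) (p - s)
      + (if Suc s < Suc p then ffact (y r) (p - Suc s) * (- (y p - of_nat (p - 1 - s))) else 0)"
    using rs by (simp add: ffact_vandermonde_def ffact_column_op_def scalar_prod_def distrib_left
        sum.distrib if_distrib[of "\<lambda>z. _ * z"] sum.delta cong: if_cong)
  also have "\<dots> = (if s < p then (y r - y p) * ffact (y r) (p - 1 - s) else 1)"
  proof (cases "s < p")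
    case True
    then have "p - s = Suc (p - 1 - s)"
      by simp
    then show ?thesis
      using True by (simp add: ffact_Suc algebra_simps)
  qed (use rs in simp)
  finally show "(?V * ?U) $$ (r, s) = four_block_mat ?B ?C (0\<^sub>m 1 p) (1\<^sub>m 1) $$ (r, s)"
    using rs by (auto simp: four_block_mat_def less_Suc_eq)
qed (auto simp: ffact_vandermonde_def ffact_column_op_def)

lemma det_ffact_vandermonde:
  "det (ffact_vandermonde m y) = (\<Prod>b\<in>{0..<m}. \<Prod>a\<in>{0..<b}. y a - y b)"
proof (induction m)
  case 0
  then show ?case by (simp add: ffact_vandermonde_def)
next
  case (Suc p)
  have "det (ffact_vandermonde (Suc p) y * ffact_column_op p y)
      = det (ffact_vandermonde (Suc p) y) * det (ffact_column_op p y)"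
    by (rule det_mult) (auto simp: ffact_vandermonde_def ffact_column_op_def)
  then have "det (ffact_vandermonde (Suc p) y) = det (ffact_vandermonde (Suc p) y * ffact_column_op p y)"
    by (simp add: det_ffact_column_op)
  also have "\<dots> = det (mat p p (\<lambda>(r, s). (y r - y p) * ffact (y r) (p - 1 - s))) * det (1\<^sub>m 1 :: 'a mat)"
    unfolding ffact_vandermonde_times_column_op by (rule det_four_block_mat_lower_left_zero) auto
  also have "\<dots> = (\<Prod>r\<in>{0..<p}. y r - y p) * det (ffact_vandermonde p y)"
    unfolding ffact_vandermonde_def by (simp add: det_mat_scale_rows)
  finally show ?case
    using Suc by (simp add: mult_ac)
qed

lemma sum_perms_inv_fact:
  fixes L :: "nat \<Rightarrow> nat"
  shows "(\<Sum>\<rho>\<in>{\<rho>. \<rho> permutes {0..<m}}. signof \<rho> * (\<Prod>r\<in>{0..<m}. inv_fact (int (L r) - int (m - 1 - \<rho> r))))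
       = (\<Prod>r\<in>{0..<m}. 1 / fact (L r)) * (\<Prod>b\<in>{0..<m}. \<Prod>a\<in>{0..<b}. of_nat (L a) - of_nat (L b))"
proof -
  define V where "V = ffact_vandermonde m (\<lambda>r. of_nat (L r) :: complex)"
  have "(\<Sum>\<rho>\<in>{\<rho>. \<rho> permutes {0..<m}}. signof \<rho> * (\<Prod>r\<in>{0..<m}. inv_fact (int (L r) - int (m - 1 - \<rho> r))))
      = (\<Sum>\<rho>\<in>{\<rho>. \<rho> permutes {0..<m}}. (\<Prod>r\<in>{0..<m}. 1 / fact (L r)) *
          (signof \<rho> * (\<Prod>r\<in>{0..<m}. V $$ (r, \<rho> r))))"
  proof (rule sum.cong[OF refl])
    fix \<rho>
    assume "\<rho> \<in> {\<rho>. \<rho> permutes {0..<m}}"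
    then have "(\<Prod>r\<in>{0..<m}. inv_fact (int (L r) - int (m - 1 - \<rho> r)))
        = (\<Prod>r\<in>{0..<m}. 1 / fact (L r) * V $$ (r, \<rho> r))"
      using permutes_in_image[of \<rho> "{0..<m}"]
      by (intro prod.cong) (auto simp: inv_fact_diff_eq_ffact V_def ffact_vandermonde_def)
    then show "signof \<rho> * (\<Prod>r\<in>{0..<m}. inv_fact (int (L r) - int (m - 1 - \<rho> r)))
        = (\<Prod>r\<in>{0..<m}. 1 / fact (L r)) * (signof \<rho> * (\<Prod>r\<in>{0..<m}. V $$ (r, \<rho> r)))"
      by (simp only: prod.distrib mult.left_commute[of "signof \<rho>"])
  qed
  also have "\<dots> = (\<Prod>r\<in>{0..<m}. 1 / fact (L r)) * det V"
    by (subst det_def'[of _ m]) (auto simp: V_def ffact_vandermonde_def sum_distrib_left)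
  finally show ?thesis
    by (simp add: V_def det_ffact_vandermonde)
qed

lemma perm_sum_eq_cprime:
  assumes lam: "length lam = l" "k \<le> l"
  shows "fact (Nlk lam k) * (\<Sum>\<rho>\<in>{\<rho>. \<rho> permutes {0..<l - k}}. signof \<rho> *
            (\<Prod>r\<in>{0..<l - k}. inv_fact (int (lam ! (k + r)) - int r + int (\<rho> r)))) = cprime lam k"
proof -
  define m where "m = l - k"
  define L where "L r = lam ! (k + r) + (m - 1 - r)" for r
  have wv_L: "wv lam j = L (m - j)" if "1 \<le> j" "j \<le> m" for j
    using that lam by (simp add: wv_def L_def m_def)
  have "(\<Sum>\<rho>\<in>{\<rho>. \<rho> permutes {0..<m}}. signof \<rho> *
            (\<Prod>r\<in>{0..<m}. inv_fact (int (lam ! (k + r)) - int r + int (\<rho> r))))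
      = (\<Sum>\<rho>\<in>{\<rho>. \<rho> permutes {0..<m}}. signof \<rho> * (\<Prod>r\<in>{0..<m}. inv_fact (int (L r) - int (m - 1 - \<rho> r))))"
  proof (intro sum.cong refl arg_cong2[where f="(*)"] prod.cong)
    fix \<rho> r
    assume \<rho>: "\<rho> \<in> {\<rho>. \<rho> permutes {0..<m}}" and r: "r \<in> {0..<m}"
    then have "Suc (\<rho> r) \<le> m"
      by (simp add: permutes_in_image Suc_le_eq)
    with r have "int (L r) - int (m - 1 - \<rho> r) = int (lam ! (k + r)) - int r + int (\<rho> r)"
      by (simp add: L_def of_nat_diff)
    then show "inv_fact (int (lam ! (k + r)) - int r + int (\<rho> r)) = inv_fact (int (L r) - int (m - 1 - \<rho> r))"
      by simp
  qed
  also have "\<dots> = (\<Prod>r\<in>{0..<m}. 1 / fact (L r)) * (\<Prod>b\<in>{0..<m}. \<Prod>a\<in>{0..<b}. of_nat (L a) - of_nat (L b))"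
    by (rule sum_perms_inv_fact)
  also have "(\<Prod>r\<in>{0..<m}. 1 / fact (L r)) = 1 / (\<Prod>i=1..m. of_nat (fact (wv lam i)) :: complex)"
    unfolding prod_dividef
    by (simp, rule prod.reindex_bij_witness[where i="\<lambda>i. m - i" and j="\<lambda>r. m - r"]) (auto simp: wv_L)
  also have "(\<Prod>b\<in>{0..<m}. \<Prod>a\<in>{0..<b}. of_nat (L a) - of_nat (L b))
      = (\<Prod>(b, a)\<in>Sigma {0..<m} (\<lambda>b. {0..<b}). of_nat (L a) - of_nat (L b) :: complex)"
    by (simp add: prod.Sigma)
  also have "\<dots> = (\<Prod>(i, j)\<in>{(i, j). 1 \<le> i \<and> i < j \<and> j \<le> m}. of_int (int (wv lam j) - int (wv lam i)))"
    by (rule prod.reindex_bij_witness[where i="\<lambda>(i, j). (m - i, m - j)" and j="\<lambda>(b, a). (m - b, m - a)"])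
      (auto simp: wv_L)
  finally show ?thesis
    unfolding cprime_def lam(1) m_def[symmetric] by simp
qed

section \<open>Derivatives of Schur functions at \<open>[x\<^sub>1] + \<dots> + [x\<^sub>k]\<close>\<close>

lemma sum_perm_counts:
  assumes "length lam = l" "k \<le> l" "\<rho> permutes {0..<l - k}"
  shows "(\<Sum>i\<in>{0..<l}. perm_counts lam k \<rho> i) = int (Nlk lam k)"
proof -
  define m where "m = l - k"
  have lkm: "l = k + m"
    using assms by (simp add: m_def)
  have "(\<Sum>i\<in>{0..<l}. perm_counts lam k \<rho> i) = (\<Sum>i\<in>{k..<l}. perm_counts lam k \<rho> i)"
    using assms by (simp add: sum.atLeastLessThan_concat[of 0 k l, symmetric] perm_counts_def)
  also have "\<dots> = (\<Sum>r\<in>{0..<m}. int (lam ! (k + r)) - int r + int (\<rho> r))"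
    by (rule sum.reindex_bij_witness[where i="\<lambda>r. k + r" and j="\<lambda>i. i - k"])
      (auto simp: perm_counts_def lkm)
  also have "\<dots> = (\<Sum>r\<in>{0..<m}. int (lam ! (k + r)))"
    using sum.permute[OF assms(3)[folded m_def], of int]
    by (simp add: sum.distrib sum_subtractf comp_def)
  also have "\<dots> = int (Nlk lam k)"
    unfolding Nlk_def assms(1) of_nat_sum
    by (rule sum.reindex_bij_witness[where i="\<lambda>i. i - k" and j="\<lambda>r. k + r"]) (auto simp: lkm)
  finally show ?thesis .
qed

lemma card_words_perm_counts:
  assumes "length lam = l" "k \<le> l" "\<rho> permutes {0..<l - k}"
  shows "of_nat (card {xs \<in> words (Nlk lam k) l. \<forall>i<l. int (count (mset xs) i) = perm_counts lam k \<rho> i})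
       = fact (Nlk lam k) * (\<Prod>r\<in>{0..<l - k}. inv_fact (int (lam ! (k + r)) - int r + int (\<rho> r)))"
proof -
  have "(\<Prod>i\<in>{0..<k}. inv_fact (perm_counts lam k \<rho> i)) = 1"
    by (simp add: perm_counts_def inv_fact_def)
  then have "(\<Prod>i\<in>{0..<l}. inv_fact (perm_counts lam k \<rho> i))
      = (\<Prod>i\<in>{k..<l}. inv_fact (perm_counts lam k \<rho> i))"
    using assms(2) by (simp add: prod.atLeastLessThan_concat[of 0 k l, symmetric])
  also have "\<dots> = (\<Prod>r\<in>{0..<l - k}. inv_fact (int (lam ! (k + r)) - int r + int (\<rho> r)))"
    by (rule prod.reindex_bij_witness[where i="\<lambda>r. k + r" and j="\<lambda>i. i - k"])
      (use assms(2) in \<open>auto simp: perm_counts_def\<close>)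
  finally show ?thesis
    using card_words_with_int_counts[OF sum_perm_counts[OF assms]] by simp
qed

lemma d1_pow_schur_tx_agreeing:
  assumes lam: "is_partition lam" "length lam = l" "k \<le> l"
    and mu: "is_partition mu" "mu = lam \<or> plt lam mu" "length mu = l"
      "\<And>i. i \<in> {k..<l} \<Longrightarrow> mu ! i = lam ! i"
  shows "(d1 ^^ Nlk lam k) (schur mu) (tx k x) = cprime lam k * schur (take k mu) (tx k x)"
proof -
  let ?N = "Nlk lam k" and ?P = "{\<rho>. \<rho> permutes {0..<l - k}}" and ?s = "schur (take k mu) (tx k x)"
  let ?counts = "\<lambda>\<rho> xs. \<forall>i<l. int (count (mset xs) i) = perm_counts lam k \<rho> i"
  have "(d1 ^^ ?N) (schur mu) (tx k x) = (\<Sum>xs\<in>words ?N l. \<Sum>\<rho>\<in>?P. if ?counts \<rho> xs then signof \<rho> * ?s else 0)"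
    unfolding schur_eq_jt_det[of mu] d1_pow_jt_det mu(3)
    by (intro sum.cong refl) (rule jt_det_word_tx[OF lam mu])
  also have "\<dots> = (\<Sum>\<rho>\<in>?P. of_nat (card {xs \<in> words ?N l. ?counts \<rho> xs}) * (signof \<rho> * ?s))"
    by (subst sum.swap) (simp add: sum.inter_filter[symmetric])
  also have "\<dots> = ?s * (fact ?N * (\<Sum>\<rho>\<in>?P. signof \<rho> *
      (\<Prod>r\<in>{0..<l - k}. inv_fact (int (lam ! (k + r)) - int r + int (\<rho> r)))))"
    using lam(2,3) by (simp add: card_words_perm_counts sum_distrib_left mult_ac)
  also have "\<dots> = cprime lam k * ?s"
    using perm_sum_eq_cprime[OF lam(2,3)] by simp
  finally show ?thesis .
qed

lemma d1_pow_schur_tx_vanishing: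
  assumes lam: "is_partition lam" "length lam = l" "k \<le> l"
    and mu: "is_partition mu" "mu = lam \<or> plt lam mu"
    and not_agreeing: "\<not> (length mu = l \<and> (\<forall>i\<in>{k..<l}. mu ! i = lam ! i))"
  shows "(d1 ^^ Nlk lam k) (schur mu) (tx k x) = 0"
proof -
  let ?n = "length mu"
  have "jt_det ?n (\<lambda>i. int (mu ! i) - int i - int (count (mset xs) i)) (tx k x) = 0"
    if xs: "xs \<in> words (Nlk lam k) ?n" for xs
  proof (rule ccontr)
    assume "jt_det ?n (\<lambda>i. int (mu ! i) - int i - int (count (mset xs) i)) (tx k x) \<noteq> 0"
    then obtain \<sigma> where \<sigma>: "\<sigma> permutes {0..<?n}"
      and \<sigma>_rows: "\<And>i. i < ?n \<Longrightarrow> k \<le> \<sigma> i \<Longrightarrow> int (mu ! i) - int i - int (count (mset xs) i) = - int (\<sigma> i)"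
      using jt_det_tx_nonzero_imp by blast
    have "(\<Sum>i\<in>{0..<?n}. count (mset xs) i) = Nlk lam k"
      using xs sum_count_mset[of xs "{0..<?n}"] by (simp add: words_def)
    from jt_support[OF lam mu refl this \<sigma> \<sigma>_rows] not_agreeing show False
      by blast
  qed
  then show ?thesis
    unfolding schur_eq_jt_det d1_pow_jt_det by (simp add: sum.neutral)
qed

lemma tau_coef_d1_pow_schur_tx:
  assumes lam: "is_partition lam" "length lam = l" "k \<le> l" and mu: "is_partition mu"
  shows "tau_coef lam xi mu * (d1 ^^ Nlk lam k) (schur mu) (tx k x)
       = (if length mu \<le> l \<and> (\<forall>i\<in>{k..<l}. part mu i = lam ! i)
          then cprime lam k * (tau_coef lam xi mu * schur (take k mu) (tx k x)) else 0)"
proof (cases "mu = lam \<or> plt lam mu")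
  case True
  then have "l \<le> length mu"
    using dominating_partition(1)[OF lam(1)] lam(2) by blast
  then have "length mu \<le> l \<and> (\<forall>i\<in>{k..<l}. part mu i = lam ! i)
      \<longleftrightarrow> length mu = l \<and> (\<forall>i\<in>{k..<l}. mu ! i = lam ! i)"
    by (auto simp: part_def)
  then show ?thesis
    using d1_pow_schur_tx_agreeing[OF lam mu True] d1_pow_schur_tx_vanishing[OF lam mu True] by auto
next
  case False
  then show ?thesis
    by (simp add: tau_coef_def)
qed

lemma finite_partitions_of: "finite {mu. is_partition mu \<and> int (sum_list mu) = d}"
proof (rule finite_subset)
  have "length mu \<le> sum_list mu" if "0 \<notin> set mu" for mu :: "nat list"
    using that by (induction mu) auto
  then show "{mu. is_partition mu \<and> int (sum_list mu) = d} \<subseteq> {xs. set xs \<subseteq> {0..nat d} \<and> length xs \<le> nat d}"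
    by (auto simp: is_partition_def dest: member_le_sum_list)
  show "finite {xs. set xs \<subseteq> {0..nat d} \<and> length xs \<le> nat d}"
    by (rule finite_lists_length_le) simp
qed

theorem theorem3p2:
  fixes lam :: "nat list" and xi :: "nat list \<Rightarrow> complex" and k :: nat
  assumes "is_partition lam" and "length lam = l" and "k \<le> l"
  shows "\<forall>(d::int) (x::nat \<Rightarrow> complex).
    (\<Sum>mu\<in>{mu. is_partition mu \<and> int (sum_list mu) = d + int (Nlk lam k)}.
        tau_coef lam xi mu * (d1 ^^ Nlk lam k) (schur mu) (tx k x))
    = cprime lam k *
      (\<Sum>mu\<in>{mu. is_partition mu \<and> length mu \<le> l \<and> (\<forall>i\<in>{k..<l}. part mu i = lam ! i)
                 \<and> int (sum_list mu) = d + int (Nlk lam k)}.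
        tau_coef lam xi mu * schur (take k mu) (tx k x))"
proof (intro allI)
  fix d :: int and x :: "nat \<Rightarrow> complex"
  let ?A = "{mu. is_partition mu \<and> int (sum_list mu) = d + int (Nlk lam k)}"
  let ?survives = "\<lambda>mu. length mu \<le> l \<and> (\<forall>i\<in>{k..<l}. part mu i = lam ! i)"
  have "(\<Sum>mu\<in>?A. tau_coef lam xi mu * (d1 ^^ Nlk lam k) (schur mu) (tx k x))
      = (\<Sum>mu\<in>?A. if ?survives mu then cprime lam k * (tau_coef lam xi mu * schur (take k mu) (tx k x)) else 0)"
    using tau_coef_d1_pow_schur_tx[OF assms] by (intro sum.cong) auto
  also have "\<dots> = (\<Sum>mu\<in>{mu\<in>?A. ?survives mu}. cprime lam k * (tau_coef lam xi mu * schur (take k mu) (tx k x)))"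
    by (rule sum.inter_filter[OF finite_partitions_of, symmetric])
  also have "\<dots> = cprime lam k * (\<Sum>mu\<in>{mu\<in>?A. ?survives mu}. tau_coef lam xi mu * schur (take k mu) (tx k x))"
    by (rule sum_distrib_left[symmetric])
  also have "{mu\<in>?A. ?survives mu} = {mu. is_partition mu \<and> length mu \<le> l \<and> (\<forall>i\<in>{k..<l}. part mu i = lam ! i)
                 \<and> int (sum_list mu) = d + int (Nlk lam k)}"
    by auto
  finally show "(\<Sum>mu\<in>?A. tau_coef lam xi mu * (d1 ^^ Nlk lam k) (schur mu) (tx k x))
    = cprime lam k *
      (\<Sum>mu\<in>{mu. is_partition mu \<and> length mu \<le> l \<and> (\<forall>i\<in>{k..<l}. part mu i = lam ! i)
                 \<and> int (sum_list mu) = d + int (Nlk lam k)}.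
        tau_coef lam xi mu * schur (take k mu) (tx k x))" .
qed

end
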